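(* The ordinary generating function $A(x,y;p,1)=\sum_{n\ge1}a_n(y;p,1)x^n$ is given by $$A(x,y;p,1)=xyp+\frac{x^2yp(1-p)}{1-yp}\left(\sum_{j\ge0}\frac{(-1)^jx^jp^{j+\binom{j+2}{2}}}{\prod_{i=0}^{j}(1-p-xp^{i+1})}-y^2p^2\sum_{j\ge0}\frac{(-1)^jx^jy^jp^{2j+\binom{j+2}{2}}}{\prod_{i=0}^{j}(1-p-xyp^{i+2})}\right).$$
   Context: An inversion sequence of length $n$ is a sequence $\rho=\rho_1\cdots\rho_n$ of integers with $1\le \rho_i\le i$ for all $i$; $I_{n,i}$ is the set of those of length $n$ with last letter $i$. Let $\mathrm{area}(\rho)=\rho_1+\cdots+\rho_n$ and $\mathrm{sper}(\rho)=n+\rho_1+\sum_{i=1}^{n-1}\max(\rho_{i+1}-\rho_i,0)$ (area and semi-perimeter of the associated bargraph). Define $a_n(y;p,q)=\sum_{i=1}^n y^i\sum_{\rho\in I_{n,i}}p^{\mathrm{area}(\rho)}q^{\mathrm{sper}(\rho)}$. The identity is one of power series in $x$ (with coefficients rational functions of $p,y$; e.g. valid for $|x|,|p|<1$ small enough). *)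

theory Defs
  imports Complex_Main "HOL-Computational_Algebra.Formal_Power_Series"
begin

(* Inversion sequences of length n, as lists rho = [rho_1,...,rho_n] (0-indexed in the list):
   1 <= rho_i <= i. *)
definition invseq :: "nat \<Rightarrow> nat list set" where
  "invseq n = {\<rho>. length \<rho> = n \<and> (\<forall>k<n. 1 \<le> \<rho> ! k \<and> \<rho> ! k \<le> k + 1)}"

definition invseq_last :: "nat \<Rightarrow> nat \<Rightarrow> nat list set" where
  "invseq_last n i = {\<rho> \<in> invseq n. last \<rho> = i}"

definition area :: "nat list \<Rightarrow> nat" where
  "area \<rho> = sum_list \<rho>"

(* semi-perimeter: n + rho_1 + sum_{i=1}^{n-1} max(rho_{i+1} - rho_i, 0);
   truncated nat subtraction equals max(. , 0). *)
definition sper :: "nat list \<Rightarrow> nat" where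
  "sper \<rho> = length \<rho> + hd \<rho> + (\<Sum>i<length \<rho> - 1. \<rho> ! (i + 1) - \<rho> ! i)"

definition a_poly :: "nat \<Rightarrow> complex \<Rightarrow> complex \<Rightarrow> complex \<Rightarrow> complex" where
  "a_poly n y p q = (\<Sum>i=1..n. y ^ i * (\<Sum>\<rho>\<in>invseq_last n i. p ^ area \<rho> * q ^ sper \<rho>))"

definition A_gf :: "complex \<Rightarrow> complex \<Rightarrow> complex \<Rightarrow> complex fps" where
  "A_gf y p q = Abs_fps (\<lambda>n. if n = 0 then 0 else a_poly n y p q)"

definition T1 :: "complex \<Rightarrow> complex \<Rightarrow> nat \<Rightarrow> complex fps" where
  "T1 y p j = fps_const ((-1) ^ j * p ^ (j + ((j + 2) choose 2))) * fps_X ^ j *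
     inverse (\<Prod>i=0..j. fps_const (1 - p) - fps_const (p ^ (i + 1)) * fps_X)"

definition T2 :: "complex \<Rightarrow> complex \<Rightarrow> nat \<Rightarrow> complex fps" where
  "T2 y p j = fps_const ((-1) ^ j * y ^ j * p ^ (2 * j + ((j + 2) choose 2))) * fps_X ^ j *
     inverse (\<Prod>i=0..j. fps_const (1 - p) - fps_const (y * p ^ (i + 2)) * fps_X)"

end

theory Submission
  imports Defs
begin

unbundle fps_syntax

(* Both sums in the theorem are instances, at c = 1 and c = yp, of
   G_c(x) = \<Sum>_j (-1)^j c^j x^j p^(j + C(j+2,2)) / \<Prod>_(i\<le>j) (1 - p - c x p^(i+1)).
   The j-th summand has order j, so the series converges x-adically, and splitting off the factor
   i = 0 gives the functional equation (1 - p - c p x) G_c(x) = p - c p^3 x G_(pc)(x).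
   By induction on n it forces [x^n] G_c = S_(n+1)(p) c^n / (1 - p), and the theorem reduces to
   a geometric sum. *)

lemma invseq_Suc:
  "invseq (Suc n) = (\<lambda>(\<rho>, k). \<rho> @ [k]) ` (invseq n \<times> {1..Suc n})"
proof (intro equalityI subsetI)
  fix xs assume xs: "xs \<in> invseq (Suc n)"
  then have "xs \<noteq> []" by (auto simp: invseq_def)
  then have "xs = butlast xs @ [last xs]" by simp
  moreover have "butlast xs \<in> invseq n" "last xs \<in> {1..Suc n}"
    using xs \<open>xs \<noteq> []\<close> by (auto simp: invseq_def nth_butlast last_conv_nth)
  ultimately show "xs \<in> (\<lambda>(\<rho>, k). \<rho> @ [k]) ` (invseq n \<times> {1..Suc n})"
    by (intro image_eqI[where x = "(butlast xs, last xs)"]) auto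
next
  fix xs assume "xs \<in> (\<lambda>(\<rho>, k). \<rho> @ [k]) ` (invseq n \<times> {1..Suc n})"
  then show "xs \<in> invseq (Suc n)"
    by (auto simp: invseq_def nth_append less_Suc_eq)
qed

lemma invseq_last_Suc:
  assumes "i \<in> {1..Suc n}"
  shows "invseq_last (Suc n) i = (\<lambda>\<rho>. \<rho> @ [i]) ` invseq n"
  using assms by (auto simp: invseq_last_def invseq_Suc)

definition area_poly :: "'a::comm_semiring_1 \<Rightarrow> nat \<Rightarrow> 'a" where
  "area_poly p n = (\<Sum>\<rho>\<in>invseq n. p ^ area \<rho>)"

lemma area_poly_0 [simp]: "area_poly p 0 = 1"
proof -
  have "invseq 0 = {[]}" by (auto simp: invseq_def)
  then show ?thesis by (simp add: area_poly_def area_def)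
qed

lemma area_poly_Suc: "area_poly p (Suc n) = area_poly p n * (\<Sum>k=1..Suc n. p ^ k)"
proof -
  have inj: "inj_on (\<lambda>(\<rho>, k). \<rho> @ [k]) (invseq n \<times> {1..Suc n})"
    by (auto simp: inj_on_def)
  have "area_poly p (Suc n) = (\<Sum>(\<rho>, k)\<in>invseq n \<times> {1..Suc n}. p ^ area \<rho> * p ^ k)"
    unfolding area_poly_def invseq_Suc sum.reindex[OF inj]
    by (simp add: case_prod_unfold area_def power_add)
  also have "\<dots> = area_poly p n * (\<Sum>k=1..Suc n. p ^ k)"
    by (simp only: area_poly_def sum_product sum.cartesian_product)
  finally show ?thesis .
qed

lemma a_poly_Suc_at_1:
  "a_poly (Suc n) y p 1 = area_poly p n * (\<Sum>i=1..Suc n. (y * p) ^ i)"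
proof -
  have "(\<Sum>\<rho>\<in>invseq_last (Suc n) i. p ^ area \<rho> * 1 ^ sper \<rho>) = p ^ i * area_poly p n"
    if "i \<in> {1..Suc n}" for i
  proof -
    have "inj_on (\<lambda>\<rho>. \<rho> @ [i]) (invseq n)" by (auto simp: inj_on_def)
    then show ?thesis
      using that by (simp add: invseq_last_Suc sum.reindex area_poly_def area_def
          power_add sum_distrib_left mult.commute)
  qed
  then have "a_poly (Suc n) y p 1 = (\<Sum>i=1..Suc n. y ^ i * (p ^ i * area_poly p n))"
    unfolding a_poly_def by (intro sum.cong) auto
  then show ?thesis
    by (simp only: sum_distrib_left power_mult_distrib mult_ac)
qed

lemma fps_nth_sum_lessThan_if_nth_below_index:
  fixes f :: "nat \<Rightarrow> 'a::comm_monoid_add fps"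
  assumes "\<And>j n. n < j \<Longrightarrow> f j $ n = 0" and "k < N"
  shows "(\<Sum>j<N. f j) $ k = (\<Sum>j\<le>k. f j $ k)"
  unfolding fps_sum_nth by (rule sum.mono_neutral_right) (use assms in auto)

lemma sums_fps_if_nth_below_index:
  fixes f :: "nat \<Rightarrow> 'a::ab_group_add fps"
  assumes "\<And>j n. n < j \<Longrightarrow> f j $ n = 0"
  shows "f sums Abs_fps (\<lambda>n. \<Sum>j\<le>n. f j $ n)"
  unfolding sums_def
proof (rule tendsto_fpsI)
  fix n
  show "\<forall>\<^sub>F N in sequentially. sum f {..<N} $ n = Abs_fps (\<lambda>n. \<Sum>j\<le>n. f j $ n) $ n"
    using eventually_gt_at_top[of n]
    by eventually_elim (simp add: fps_nth_sum_lessThan_if_nth_below_index assms)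
qed

definition den_factor :: "'a::field \<Rightarrow> 'a \<Rightarrow> nat \<Rightarrow> 'a fps" where
  "den_factor p c i = fps_const (1 - p) - fps_const (c * p ^ (i + 1)) * fps_X"

definition G_term :: "'a::field \<Rightarrow> 'a \<Rightarrow> nat \<Rightarrow> 'a fps" where
  "G_term p c j = fps_const ((-1) ^ j * c ^ j * p ^ (j + ((j + 2) choose 2))) * fps_X ^ j *
     inverse (\<Prod>i=0..j. den_factor p c i)"

lemma T1_eq_G_term: "T1 y p = G_term p 1"
  by (simp add: fun_eq_iff T1_def G_term_def den_factor_def)

lemma T2_eq_G_term: "T2 y p = G_term p (y * p)"
proof
  fix j
  have "(-1) ^ j * y ^ j * p ^ (2 * j + ((j + 2) choose 2)) =
        (-1) ^ j * (y * p) ^ j * p ^ (j + ((j + 2) choose 2))"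
    by (simp add: power_mult_distrib power_add mult_2)
  moreover have "y * p ^ (i + 2) = y * p * p ^ (i + 1)" for i
    by simp
  ultimately show "T2 y p j = G_term p (y * p) j"
    by (simp only: T2_def G_term_def den_factor_def)
qed

lemma G_term_nth_below: "n < j \<Longrightarrow> G_term p c j $ n = 0"
  by (simp add: G_term_def mult.commute[of _ "fps_X ^ j"] mult.assoc fps_X_power_mult_nth)

lemma den_factor_Suc: "den_factor p c (Suc i) = den_factor p (p * c) i"
  by (simp add: den_factor_def mult_ac)

lemma den_factor_nth_0: "den_factor p c i $ 0 = 1 - p"
  by (simp add: den_factor_def)

lemma G_term_0_mult_den_factor:
  assumes "p \<noteq> 1"
  shows "G_term p c 0 * den_factor p c 0 = fps_const p"
proof -
  have "inverse (den_factor p c 0) * den_factor p c 0 = 1"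
    using assms by (simp add: inverse_mult_eq_1 den_factor_nth_0)
  then show ?thesis
    by (simp add: G_term_def mult.assoc numeral_2_eq_2)
qed

lemma G_term_Suc_mult_den_factor:
  assumes "p \<noteq> 1"
  shows "G_term p c (Suc j) * den_factor p c 0 = - fps_const (c * p ^ 3) * fps_X * G_term p (p * c) j"
proof -
  have prod: "(\<Prod>i=0..Suc j. den_factor p c i) = den_factor p c 0 * (\<Prod>i=0..j. den_factor p (p * c) i)"
    by (simp only: prod.atLeast0_atMost_Suc_shift comp_def den_factor_Suc)
  have inv: "inverse (den_factor p c 0) * den_factor p c 0 = 1"
    using assms by (simp add: inverse_mult_eq_1 den_factor_nth_0)
  have "(Suc j + 2) choose 2 = ((j + 2) choose 2) + Suc (Suc j)"
    by (simp add: numeral_2_eq_2)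
  then have coeff: "(-1) ^ Suc j * c ^ Suc j * p ^ (Suc j + ((Suc j + 2) choose 2)) =
      - (c * p ^ 3) * ((-1) ^ j * (p * c) ^ j * p ^ (j + ((j + 2) choose 2)))"
    by (simp add: power_add power_mult_distrib numeral_3_eq_3 mult_ac)
  have "G_term p c (Suc j) * den_factor p c 0 =
      fps_const ((-1) ^ Suc j * c ^ Suc j * p ^ (Suc j + ((Suc j + 2) choose 2))) * fps_X ^ Suc j *
      inverse (\<Prod>i=0..j. den_factor p (p * c) i) * (inverse (den_factor p c 0) * den_factor p c 0)"
    unfolding G_term_def prod fps_inverse_mult by (simp only: mult_ac)
  also have "\<dots> = - fps_const (c * p ^ 3) * fps_X * G_term p (p * c) j"
    unfolding inv coeff G_term_def
    by (simp add: fps_const_neg[symmetric] mult_ac del: fps_const_neg)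
  finally show ?thesis .
qed

lemma sum_G_term_mult_den_factor:
  assumes "p \<noteq> 1"
  shows "(\<Sum>j<Suc N. G_term p c j) * den_factor p c 0 =
    fps_const p - fps_const (c * p ^ 3) * fps_X * (\<Sum>j<N. G_term p (p * c) j)"
proof -
  have "(\<Sum>j<Suc N. G_term p c j) * den_factor p c 0 =
      G_term p c 0 * den_factor p c 0 + (\<Sum>j<N. G_term p c (Suc j) * den_factor p c 0)"
    by (simp only: sum.lessThan_Suc_shift distrib_right sum_distrib_right)
  also have "\<dots> = fps_const p + (\<Sum>j<N. - fps_const (c * p ^ 3) * fps_X * G_term p (p * c) j)"
    by (simp only: G_term_0_mult_den_factor[OF assms] G_term_Suc_mult_den_factor[OF assms])
  also have "\<dots> = fps_const p - fps_const (c * p ^ 3) * fps_X * (\<Sum>j<N. G_term p (p * c) j)"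
    by (simp add: sum_distrib_left sum_negf fps_const_neg[symmetric] del: fps_const_neg)
  finally show ?thesis .
qed

definition G_coeff :: "'a::field \<Rightarrow> 'a \<Rightarrow> nat \<Rightarrow> 'a" where
  "G_coeff p c n = (\<Sum>j\<le>n. G_term p c j $ n)"

lemma sums_G_term: "G_term p c sums Abs_fps (G_coeff p c)"
  unfolding G_coeff_def[abs_def]
  by (rule sums_fps_if_nth_below_index) (rule G_term_nth_below)

lemma nth_sum_G_term: "k < N \<Longrightarrow> (\<Sum>j<N. G_term p c j) $ k = G_coeff p c k"
  unfolding G_coeff_def
  by (rule fps_nth_sum_lessThan_if_nth_below_index) (auto intro: G_term_nth_below)

lemma G_functional_eq:
  assumes "p \<noteq> 1"
  shows "Abs_fps (G_coeff p c) * den_factor p c 0 =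
    fps_const p - fps_const (c * p ^ 3) * fps_X * Abs_fps (G_coeff p (p * c))"
proof (rule fps_ext)
  fix n
  have "(Abs_fps (G_coeff p c) * den_factor p c 0) $ n =
      ((\<Sum>j<Suc (Suc n). G_term p c j) * den_factor p c 0) $ n"
    unfolding fps_mult_nth by (intro sum.cong) (simp_all add: nth_sum_G_term del: sum.lessThan_Suc)
  also have "\<dots> = (fps_const p - fps_const (c * p ^ 3) * fps_X * (\<Sum>j<Suc n. G_term p (p * c) j)) $ n"
    by (simp only: sum_G_term_mult_den_factor[OF assms])
  also have "\<dots> = (fps_const p - fps_const (c * p ^ 3) * fps_X * Abs_fps (G_coeff p (p * c))) $ n"
    by (simp add: mult.assoc nth_sum_G_term del: sum.lessThan_Suc)
  finally show "(Abs_fps (G_coeff p c) * den_factor p c 0) $ n =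
      (fps_const p - fps_const (c * p ^ 3) * fps_X * Abs_fps (G_coeff p (p * c))) $ n" .
qed

lemma G_coeff_recurrence:
  assumes "p \<noteq> 1"
  shows "(1 - p) * G_coeff p c 0 = p"
    and "(1 - p) * G_coeff p c (Suc n) = c * p * G_coeff p c n - c * p ^ 3 * G_coeff p (p * c) n"
proof -
  let ?G = "\<lambda>c. Abs_fps (G_coeff p c)"
  have "fps_const (1 - p) * ?G c - fps_const (c * p) * (fps_X * ?G c) =
      fps_const p - fps_const (c * p ^ 3) * (fps_X * ?G (p * c))"
    using G_functional_eq[OF assms, of c] by (simp add: den_factor_def algebra_simps)
  from arg_cong[where f = "\<lambda>f. f $ 0", OF this] arg_cong[where f = "\<lambda>f. f $ Suc n", OF this]
  show "(1 - p) * G_coeff p c 0 = p"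
    and "(1 - p) * G_coeff p c (Suc n) = c * p * G_coeff p c n - c * p ^ 3 * G_coeff p (p * c) n"
    by (simp_all add: algebra_simps)
qed

lemma G_coeff_eq:
  assumes "p \<noteq> 1"
  shows "G_coeff p c n = area_poly p (Suc n) * c ^ n / (1 - p)"
proof (induction n arbitrary: c)
  case 0
  show ?case
    using G_coeff_recurrence(1)[OF assms, of c] assms by (simp add: area_poly_Suc field_simps)
next
  case (Suc n)
  have "(1 - p) * G_coeff p c (Suc n) =
      c * p * G_coeff p c n - c * p ^ 3 * G_coeff p (p * c) n"
    by (rule G_coeff_recurrence(2)[OF assms])
  also have "\<dots> = area_poly p (Suc n) * c ^ Suc n * (p - p ^ Suc (Suc (Suc n))) / (1 - p)"
    unfolding Suc.IH by (simp add: diff_divide_distrib algebra_simps power_mult_distrib numeral_3_eq_3)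
  also have "\<dots> = area_poly p (Suc (Suc n)) * c ^ Suc n"
    using assms by (subst area_poly_Suc, subst sum_gp) simp
  finally show ?case
    using assms by (simp add: field_simps)
qed

lemma A_gf_at_1_nth_Suc_Suc:
  assumes "p \<noteq> 1" and "y * p \<noteq> 1"
  shows "A_gf y p 1 $ Suc (Suc n) =
    y * p * (1 - p) / (1 - y * p) * (G_coeff p 1 n - y ^ 2 * p ^ 2 * G_coeff p (y * p) n)"
proof -
  have "A_gf y p 1 $ Suc (Suc n) = area_poly p (Suc n) * (\<Sum>i=1..Suc (Suc n). (y * p) ^ i)"
    by (simp add: A_gf_def a_poly_Suc_at_1 del: sum.cl_ivl_Suc)
  also have "\<dots> = area_poly p (Suc n) * (y * p - (y * p) ^ Suc (Suc (Suc n))) / (1 - y * p)"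
    using assms by (subst sum_gp) simp
  also have "\<dots> = y * p * (1 - p) / (1 - y * p) * (area_poly p (Suc n) * 1 ^ n / (1 - p)
      - (y * p) ^ 2 * (area_poly p (Suc n) * (y * p) ^ n / (1 - p)))"
    using assms by (simp add: divide_simps) (simp add: algebra_simps power2_eq_square)
  also have "\<dots> = y * p * (1 - p) / (1 - y * p) *
      (G_coeff p 1 n - y ^ 2 * p ^ 2 * G_coeff p (y * p) n)"
    by (simp add: G_coeff_eq[OF assms(1)] power_mult_distrib)
  finally show ?thesis .
qed

theorem theorem2p7:
  fixes y p :: complex
  assumes "p \<noteq> 1" and "y * p \<noteq> 1"
  shows "summable (T1 y p) \<and> summable (T2 y p) \<and>
    A_gf y p 1 = fps_const (y * p) * fps_X
      + fps_const (y * p * (1 - p) / (1 - y * p)) * fps_X ^ 2 *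
        ((\<Sum>j. T1 y p j) - fps_const (y ^ 2 * p ^ 2) * (\<Sum>j. T2 y p j))"
proof -
  have sums1: "T1 y p sums Abs_fps (G_coeff p 1)"
    unfolding T1_eq_G_term by (rule sums_G_term)
  have sums2: "T2 y p sums Abs_fps (G_coeff p (y * p))"
    unfolding T2_eq_G_term by (rule sums_G_term)
  have "A_gf y p 1 = fps_const (y * p) * fps_X
      + fps_const (y * p * (1 - p) / (1 - y * p)) * fps_X ^ 2 *
        (Abs_fps (G_coeff p 1) - fps_const (y ^ 2 * p ^ 2) * Abs_fps (G_coeff p (y * p)))"
    (is "_ = ?rhs")
  proof (rule fps_ext)
    fix m
    consider "m = 0" | "m = 1" | n where "m = Suc (Suc n)"
      by (metis One_nat_def not0_implies_Suc)
    then show "A_gf y p 1 $ m = ?rhs $ m"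
    proof cases
      case 3
      then show ?thesis
        by (simp only: A_gf_at_1_nth_Suc_Suc[OF assms]) (simp add: mult.assoc fps_X_power_mult_nth)
    qed (simp_all add: A_gf_def a_poly_Suc_at_1 mult.assoc fps_X_power_mult_nth)
  qed
  then show ?thesis
    using sums1 sums2 by (simp add: sums_summable sums_unique[symmetric])
qed

end
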